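(* Let $n\ge 3$ and $m,k\ge1$ be integers, let $t\in\mathbb{Z}_n\setminus\{0\}$ with $t^2\equiv t\pmod n$, and let $G$ be the set of all $m\times k$ matrices over $\mathbb{Z}_n$ with the operation $[a_{ij}]*[b_{ij}]=[(t a_{ij}+t b_{ij})\bmod n]$. Then $(G,* )$ is a $T^3$-AG-groupoid.
   Context: An AG-groupoid is a set with a binary operation satisfying $(a*b)*c=(c*b)*a$ for all $a,b,c$. An AG-groupoid $G$ is a $T_l^3$-AG-groupoid if for all $a,b,c\in G$, $a*b=a*c$ implies $b*a=c*a$; it is a $T_r^3$-AG-groupoid if for all $a,b,c\in G$, $b*a=c*a$ implies $a*b=a*c$; and it is a $T^3$-AG-groupoid if it is both $T_l^3$ and $T_r^3$. (The groupoid above is the "type-II" AG-groupoid of matrices: the operation $tA+uB \pmod n$ with $u=t\neq0$ and $t^2\equiv u \pmod n$.) *)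

theory Defs
  imports Main
begin

definition closed_op :: "'a set \<Rightarrow> ('a \<Rightarrow> 'a \<Rightarrow> 'a) \<Rightarrow> bool" where
  "closed_op G f \<longleftrightarrow> (\<forall>a\<in>G. \<forall>b\<in>G. f a b \<in> G)"

definition AG_groupoid :: "'a set \<Rightarrow> ('a \<Rightarrow> 'a \<Rightarrow> 'a) \<Rightarrow> bool" where
  "AG_groupoid G f \<longleftrightarrow> closed_op G f \<and>
     (\<forall>a\<in>G. \<forall>b\<in>G. \<forall>c\<in>G. f (f a b) c = f (f c b) a)"

definition T3l_AG_groupoid :: "'a set \<Rightarrow> ('a \<Rightarrow> 'a \<Rightarrow> 'a) \<Rightarrow> bool" where
  "T3l_AG_groupoid G f \<longleftrightarrow> AG_groupoid G f \<and>
     (\<forall>a\<in>G. \<forall>b\<in>G. \<forall>c\<in>G. f a b = f a c \<longrightarrow> f b a = f c a)"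

definition T3r_AG_groupoid :: "'a set \<Rightarrow> ('a \<Rightarrow> 'a \<Rightarrow> 'a) \<Rightarrow> bool" where
  "T3r_AG_groupoid G f \<longleftrightarrow> AG_groupoid G f \<and>
     (\<forall>a\<in>G. \<forall>b\<in>G. \<forall>c\<in>G. f b a = f c a \<longrightarrow> f a b = f a c)"

definition T3_AG_groupoid :: "'a set \<Rightarrow> ('a \<Rightarrow> 'a \<Rightarrow> 'a) \<Rightarrow> bool" where
  "T3_AG_groupoid G f \<longleftrightarrow> T3l_AG_groupoid G f \<and> T3r_AG_groupoid G f"

text \<open>m x k matrices over Z_n: functions nat => nat => int with entries in {0..<n}
  for indices i < m, j < k, and equal to 0 outside (so that equality of
  matrices is entrywise equality).\<close>

definition mat_Zn :: "nat \<Rightarrow> nat \<Rightarrow> int \<Rightarrow> (nat \<Rightarrow> nat \<Rightarrow> int) set" where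
  "mat_Zn m k n = {A. \<forall>i j. (i < m \<and> j < k \<longrightarrow> A i j \<in> {0..<n}) \<and>
                            (\<not> (i < m \<and> j < k) \<longrightarrow> A i j = 0)}"

definition mat_op :: "nat \<Rightarrow> nat \<Rightarrow> int \<Rightarrow> int \<Rightarrow>
    (nat \<Rightarrow> nat \<Rightarrow> int) \<Rightarrow> (nat \<Rightarrow> nat \<Rightarrow> int) \<Rightarrow> (nat \<Rightarrow> nat \<Rightarrow> int)" where
  "mat_op m k n t A B = (\<lambda>i j. if i < m \<and> j < k then (t * A i j + t * B i j) mod n else 0)"

end

theory Submission
  imports Defs
begin

(* The operation is commutative, so both cancellation conditions of a T^3-AG-groupoid
   are immediate. The AG law reduces entrywise to
   t (t x + t y) + t z = t (t z + t y) + t x  (mod n),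
   and since t^2 = t (mod n) both sides are congruent to the symmetric t x + t y + t z. *)

lemma T3_AG_groupoid_if_commutative:
  assumes "AG_groupoid G f" and "\<And>a b. a \<in> G \<Longrightarrow> b \<in> G \<Longrightarrow> f a b = f b a"
  shows "T3_AG_groupoid G f"
  using assms
  unfolding T3_AG_groupoid_def T3l_AG_groupoid_def T3r_AG_groupoid_def
  by metis

lemma mat_op_commute: "mat_op m k n t A B = mat_op m k n t B A"
  by (auto simp: mat_op_def add.commute fun_eq_iff)

lemma closed_op_mat_op:
  assumes "n > 0"
  shows "closed_op (mat_Zn m k n) (mat_op m k n t)"
  using assms by (auto simp: closed_op_def mat_Zn_def mat_op_def)

lemma idempotent_mod_absorb:
  fixes n t x y z :: int
  assumes "t^2 mod n = t mod n"
  shows "(t * ((t*x + t*y) mod n) + t*z) mod n = (t*x + t*y + t*z) mod n"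
proof -
  have "(t * ((t*x + t*y) mod n) + t*z) mod n = (t * (t*x + t*y) + t*z) mod n"
    by (metis mod_add_left_eq mod_mult_right_eq)
  also have "t * (t*x + t*y) + t*z = t^2 * (x + y) + t*z"
    by (simp add: power2_eq_square algebra_simps)
  also have "(t^2 * (x + y) + t*z) mod n = (t * (x + y) + t*z) mod n"
    by (metis assms mod_add_left_eq mod_mult_left_eq)
  finally show ?thesis
    by (simp add: algebra_simps)
qed

lemma mat_op_left_invertive:
  assumes "t^2 mod n = t mod n"
  shows "mat_op m k n t (mat_op m k n t A B) C = mat_op m k n t (mat_op m k n t C B) A"
proof -
  have "(t * ((t*x + t*y) mod n) + t*z) mod n = (t * ((t*z + t*y) mod n) + t*x) mod n"
    for x y z
    using idempotent_mod_absorb[OF assms, of x y z] idempotent_mod_absorb[OF assms, of z y x]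
    by (simp add: algebra_simps)
  then show ?thesis
    by (simp add: mat_op_def fun_eq_iff)
qed

theorem mainTheorem4:
  fixes n t :: int and m k :: nat
  assumes "n \<ge> 3" and "m \<ge> 1" and "k \<ge> 1"
    and "t \<in> {0..<n}" and "t \<noteq> 0"
    and "t^2 mod n = t mod n"
  shows "T3_AG_groupoid (mat_Zn m k n) (mat_op m k n t)"
proof (rule T3_AG_groupoid_if_commutative)
  have "closed_op (mat_Zn m k n) (mat_op m k n t)"
    using closed_op_mat_op \<open>n \<ge> 3\<close> by simp
  then show "AG_groupoid (mat_Zn m k n) (mat_op m k n t)"
    using mat_op_left_invertive[OF \<open>t^2 mod n = t mod n\<close>]
    by (simp add: AG_groupoid_def)
  show "mat_op m k n t A B = mat_op m k n t B A" for A B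
    by (rule mat_op_commute)
qed

end
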